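(* Let $\mathfrak{g}$ be a $(2p+1)$-dimensional filiform Lie algebra over $\mathbb{K}$ and $\{X_0,\dots,X_{2p}\}$ a Vergne basis of $\mathfrak{g}$, with structure constants $[X_i,X_j]=\sum_k C_{i,j}^kX_k$, and set $a_{i,j}=C_{i,j}^{2p}$. Then $\mathfrak{g}$ admits a contact form if and only if $\prod_{i=1}^{p-1}a_{i,2p-1-i}=a_{1,2p-2}\,a_{2,2p-3}\cdots a_{p-1,p}\neq 0.$
   Context: $\mathbb{K}$ is algebraically closed of characteristic $0$. An $(n+1)$-dimensional Lie algebra is filiform if it is nilpotent of nilindex $n$. A Vergne basis of an $(n+1)$-dimensional filiform Lie algebra is a basis $\{X_0,\dots,X_n\}$ with $[X_0,X_i]=X_{i+1}$ for $1\le i\le n-1$, $[X_0,X_n]=0$, $[X_1,X_{n-1}]=0$, and $[X_i,X_j]\in\mathrm{span}\{X_k: k\ge i+j\}$ for $1\le i<j$; every filiform Lie algebra has such a basis. A contact form on a $(2p+1)$-dimensional Lie algebra is a linear form $\omega$ with $\omega\wedge(d\omega)^p\neq 0$, where $d\omega(X,Y)=-\omega([X,Y])$. *)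

theory Defs
  imports "HOL-Computational_Algebra.Polynomial" "HOL-Combinatorics.Permutations"
begin

text \<open>A Lie algebra of dimension n+1 with a fixed basis X_0..X_n is encoded by its
structure constants C i j k, meaning [X_i, X_j] = sum_k C i j k X_k (indices 0..n).\<close>

definition lie_sc :: "nat \<Rightarrow> (nat \<Rightarrow> nat \<Rightarrow> nat \<Rightarrow> 'k::field) \<Rightarrow> bool" where
  "lie_sc n C \<longleftrightarrow>
     (\<forall>i\<le>n. \<forall>j\<le>n. \<forall>k\<le>n. C i j k = - C j i k) \<and>
     (\<forall>i\<le>n. \<forall>j\<le>n. \<forall>l\<le>n. \<forall>m\<le>n.
        (\<Sum>k\<le>n. C i j k * C k l m + C j l k * C k i m + C l i k * C k j m) = 0)"

definition elems :: "nat \<Rightarrow> (nat \<Rightarrow> 'k::zero) set" where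
  "elems n = {x. \<forall>k>n. x k = 0}"

definition br :: "nat \<Rightarrow> (nat \<Rightarrow> nat \<Rightarrow> nat \<Rightarrow> 'k::field) \<Rightarrow> (nat \<Rightarrow> 'k) \<Rightarrow> (nat \<Rightarrow> 'k) \<Rightarrow> (nat \<Rightarrow> 'k)" where
  "br n C x y = (\<lambda>k. if k \<le> n then (\<Sum>i\<le>n. \<Sum>j\<le>n. x i * y j * C i j k) else 0)"

fun iter_br :: "nat \<Rightarrow> (nat \<Rightarrow> nat \<Rightarrow> nat \<Rightarrow> 'k::field) \<Rightarrow> (nat \<Rightarrow> 'k) list \<Rightarrow> (nat \<Rightarrow> 'k) \<Rightarrow> (nat \<Rightarrow> 'k)" where
  "iter_br n C [] y = y"
| "iter_br n C (x # xs) y = br n C x (iter_br n C xs y)"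

text \<open>The m-th term C^m g of the lower central series (C^0 g = g, C^{m+1} g = [g, C^m g])
is spanned by the iterated brackets of length m; so it is zero iff they all vanish.\<close>
definition lcs_zero :: "nat \<Rightarrow> (nat \<Rightarrow> nat \<Rightarrow> nat \<Rightarrow> 'k::field) \<Rightarrow> nat \<Rightarrow> bool" where
  "lcs_zero n C m \<longleftrightarrow>
     (\<forall>xs y. length xs = m \<longrightarrow> set xs \<subseteq> elems n \<longrightarrow> y \<in> elems n \<longrightarrow> iter_br n C xs y = (\<lambda>_. 0))"

definition filiform :: "nat \<Rightarrow> (nat \<Rightarrow> nat \<Rightarrow> nat \<Rightarrow> 'k::field) \<Rightarrow> bool" where
  "filiform n C \<longleftrightarrow> lcs_zero n C n \<and> (\<forall>k<n. \<not> lcs_zero n C k)"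

definition vergne :: "nat \<Rightarrow> (nat \<Rightarrow> nat \<Rightarrow> nat \<Rightarrow> 'k::field) \<Rightarrow> bool" where
  "vergne n C \<longleftrightarrow>
     (\<forall>i. 1 \<le> i \<and> i \<le> n - 1 \<longrightarrow> (\<forall>k\<le>n. C 0 i k = (if k = i + 1 then 1 else 0))) \<and>
     (\<forall>k\<le>n. C 0 n k = 0) \<and>
     (\<forall>k\<le>n. C 1 (n - 1) k = 0) \<and>
     (\<forall>i j k. 1 \<le> i \<and> i < j \<and> j \<le> n \<and> k \<le> n \<and> k < i + j \<longrightarrow> C i j k = 0)"

text \<open>d omega (X_a, X_b) = - omega([X_a, X_b]); omega is given by its values omega k = omega(X_k).\<close>
definition d_form :: "nat \<Rightarrow> (nat \<Rightarrow> nat \<Rightarrow> nat \<Rightarrow> 'k::field) \<Rightarrow> (nat \<Rightarrow> 'k) \<Rightarrow> nat \<Rightarrow> nat \<Rightarrow> 'k" where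
  "d_form n C \<omega> a b = - (\<Sum>k\<le>n. C a b k * \<omega> k)"

text \<open>(omega \<wedge> (d omega)^p)(X_0,...,X_{2p}), up to a nonzero normalisation constant
(which depends on the wedge-product convention and is nonzero in characteristic 0).\<close>
definition contact_value :: "nat \<Rightarrow> (nat \<Rightarrow> nat \<Rightarrow> nat \<Rightarrow> 'k::field) \<Rightarrow> (nat \<Rightarrow> 'k) \<Rightarrow> 'k" where
  "contact_value p C \<omega> =
     (\<Sum>\<sigma> | \<sigma> permutes {0..2*p}.
        of_int (sign \<sigma>) * \<omega> (\<sigma> 0) *
        (\<Prod>i<p. d_form (2*p) C \<omega> (\<sigma> (2*i+1)) (\<sigma> (2*i+2))))"

definition is_contact_form :: "nat \<Rightarrow> (nat \<Rightarrow> nat \<Rightarrow> nat \<Rightarrow> 'k::field) \<Rightarrow> (nat \<Rightarrow> 'k) \<Rightarrow> bool" where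
  "is_contact_form p C \<omega> \<longleftrightarrow> contact_value p C \<omega> \<noteq> 0"

end

(*
  On a Vergne basis of odd dimension 2p+1 all weight-zero structure constants C i j (i+j),
  i, j >= 1, vanish: the Jacobi identity with X_0 forces them, level by level, to be those of
  [X_1, X_j] = lambda X_(j+1), and [X_1, X_(2p-1)] = 0 kills lambda. Hence d omega (X_a, X_b) is 0
  for a + b >= 2p and equals -C a b 2p * omega (X_2p) for a + b = 2p - 1. Counting weights, the only
  permutations contributing to (omega /\ (d omega)^p)(X_0, ..., X_2p) send X_0 to X_2p and pair
  each X_j with X_(2p-1-j); all their terms coincide, so the value is a nonzero multiple of
  omega (X_2p)^(p+1) * prod_i a_(i,2p-1-i).
*)

theory Submission
  imports Defs
begin

lemma sum_eq_single:
  assumes "finite A" "a \<in> A" "\<And>x. x \<in> A \<Longrightarrow> x \<noteq> a \<Longrightarrow> g x = 0"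
  shows "sum g A = g a"
  using assms by (simp add: sum.remove[of A a] sum.neutral)

lemma sum_atMost_double:
  fixes f :: "nat \<Rightarrow> 'a::comm_monoid_add"
  shows "(\<Sum>j\<le>2*n. f j) = f 0 + (\<Sum>i<n. f (2*i+1) + f (2*i+2))"
proof (induction n)
  case 0
  then show ?case by simp
next
  case (Suc n)
  have "(\<Sum>j\<le>2*Suc n. f j) = (\<Sum>j\<le>2*n. f j) + f (2*n+1) + f (2*n+2)"
    by (simp add: sum.atMost_Suc)
  then show ?case using Suc by (simp add: ac_simps)
qed

lemma le_double_cases:
  "x \<le> 2*p \<Longrightarrow> x = 0 \<or> (\<exists>i<p. x = 2*i+1) \<or> (\<exists>i<p. x = 2*i+2)"
  for x p :: nat
  by presburger

lemma pair_index_simps: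
  fixes a b :: nat
  shows "2*a+1 \<noteq> 2*b+2" "2*b+2 \<noteq> 2*a+1" "(2*a+1 = 2*b+1) = (a = b)"
    "(2*a+2 = 2*b+2) = (a = b)" "2*a+1 \<noteq> 0" "2*a+2 \<noteq> 0"
  by presburger+

text \<open>The permutations of \<open>{0..2p}\<close> sending \<open>0\<close> to \<open>2p\<close> and each pair of slots
  \<open>{2i+1, 2i+2}\<close> onto a pair \<open>{j, 2p-1-j}\<close>: these index the only terms of
  \<open>\<omega> \<and> (d\<omega>)^p\<close> that can survive on a Vergne basis.\<close>

definition pair_perms :: "nat \<Rightarrow> (nat \<Rightarrow> nat) set" where
  "pair_perms p = {\<sigma>. \<sigma> permutes {0..2*p} \<and> \<sigma> 0 = 2*p \<and>
                      (\<forall>i<p. \<sigma> (2*i+1) + \<sigma> (2*i+2) + 1 = 2*p)}"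

definition pair_term :: "nat \<Rightarrow> (nat \<Rightarrow> nat \<Rightarrow> 'a::comm_ring_1) \<Rightarrow> (nat \<Rightarrow> nat) \<Rightarrow> 'a" where
  "pair_term p f \<sigma> = of_int (sign \<sigma>) * (\<Prod>i<p. f (\<sigma> (2*i+1)) (\<sigma> (2*i+2)))"

definition std_pair_perm :: "nat \<Rightarrow> nat \<Rightarrow> nat" where
  "std_pair_perm p x =
     (if x = 0 then 2*p
      else if x \<le> 2*p then (if odd x then (x-1) div 2 else 2*p - 1 - (x-2) div 2)
      else x)"

lemma std_pair_perm_simps:
  "std_pair_perm p 0 = 2*p"
  "i < p \<Longrightarrow> std_pair_perm p (2*i+1) = i"
  "i < p \<Longrightarrow> std_pair_perm p (2*i+2) = 2*p-1-i"
  "i < p \<Longrightarrow> std_pair_perm p (Suc (2*i)) = i"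
  "i < p \<Longrightarrow> std_pair_perm p (Suc (Suc (2*i))) = 2*p-1-i"
  unfolding std_pair_perm_def by simp_all

lemma std_pair_perm_permutes: "std_pair_perm p permutes {0..2*p}"
proof (rule bij_imp_permutes)
  have inj: "inj_on (std_pair_perm p) {0..2*p}"
  proof (rule inj_onI)
    fix x y assume "x \<in> {0..2*p}" "y \<in> {0..2*p}" "std_pair_perm p x = std_pair_perm p y"
    then show "x = y"
      using le_double_cases[of x p] le_double_cases[of y p] by (auto simp: std_pair_perm_simps)
  qed
  have "std_pair_perm p x \<in> {0..2*p}" if "x \<in> {0..2*p}" for x
    using that le_double_cases[of x p] by (auto simp: std_pair_perm_simps)
  then have "std_pair_perm p ` {0..2*p} \<subseteq> {0..2*p}" by blast
  then have "std_pair_perm p ` {0..2*p} = {0..2*p}"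
    using endo_inj_surj[OF _ _ inj] by simp
  then show "bij_betw (std_pair_perm p) {0..2*p} {0..2*p}"
    using inj unfolding bij_betw_def by simp
qed (simp add: std_pair_perm_def)

lemma std_pair_perm_in_pair_perms: "std_pair_perm p \<in> pair_perms p"
  unfolding pair_perms_def using std_pair_perm_permutes by (auto simp: std_pair_perm_simps)

lemma pair_permsD:
  assumes "\<sigma> \<in> pair_perms p"
  shows "\<sigma> permutes {0..2*p}" "\<sigma> 0 = 2*p" "\<And>i. i < p \<Longrightarrow> \<sigma> (2*i+1) + \<sigma> (2*i+2) + 1 = 2*p"
  using assms unfolding pair_perms_def by auto

lemma finite_pair_perms: "finite (pair_perms p)"
  by (rule finite_subset[OF _ finite_permutations[of "{0..2*p}"]]) (auto simp: pair_perms_def)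

lemma permutes_atLeastAtMost_le: "\<sigma> permutes {0..n} \<Longrightarrow> x \<le> n \<Longrightarrow> \<sigma> x \<le> n"
  for n :: nat
  using permutes_in_image[of \<sigma> "{0..n}" x] by auto

text \<open>Counting: the values \<open>\<sigma> 0\<close> and the pair sums add up to \<open>p(2p+1)\<close>, which leaves
  no room when every pair sum is below \<open>2p\<close>.\<close>

lemma pair_perms_if_pair_sums_less:
  assumes \<sigma>: "\<sigma> permutes {0..2*p}" and less: "\<And>i. i < p \<Longrightarrow> \<sigma> (2*i+1) + \<sigma> (2*i+2) < 2*p"
  shows "\<sigma> \<in> pair_perms p"
proof -
  have "(\<Sum>j\<le>2*p. j) = (\<Sum>j\<le>2*p. \<sigma> j)"
    using sum.permute[OF \<sigma>, of "\<lambda>j. j"] by (simp add: comp_def atLeast0AtMost)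
  moreover have "(\<Sum>i<p. (2*i+1) + (2*i+2::nat)) = p*(2*p+1)"
    by (induction p) (simp_all add: algebra_simps)
  ultimately have total: "\<sigma> 0 + (\<Sum>i<p. \<sigma> (2*i+1) + \<sigma> (2*i+2)) = p*(2*p+1)"
    using sum_atMost_double[of "\<lambda>j. j" p] sum_atMost_double[of \<sigma> p] by simp
  have "p*(2*p+1) = 2*p + (\<Sum>i<p. 2*p-1)"
    by (cases p) (simp_all add: algebra_simps)
  moreover have "(\<Sum>i<p. \<sigma> (2*i+1) + \<sigma> (2*i+2)) \<le> (\<Sum>i<p. 2*p-1)"
    using less by (intro sum_mono) fastforce
  ultimately have zero: "\<sigma> 0 = 2*p" and sums: "(\<Sum>i<p. \<sigma> (2*i+1) + \<sigma> (2*i+2)) = (\<Sum>i<p. 2*p-1)"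
    using total permutes_atLeastAtMost_le[OF \<sigma>, of 0] by linarith+
  have "\<sigma> (2*i+1) + \<sigma> (2*i+2) + 1 = 2*p" if "i < p" for i
    using sum_mono_inv[OF sums _ _ finite_lessThan, of i] less that by fastforce
  then show ?thesis unfolding pair_perms_def using \<sigma> zero by simp
qed

lemma pair_term_swap_within_pair:
  assumes \<sigma>: "\<sigma> \<in> pair_perms p" and i: "i < p"
    and anti: "\<And>a b. a + b + 1 = 2*p \<Longrightarrow> f b a = - f a b"
  shows "\<sigma> \<circ> transpose (2*i+1) (2*i+2) \<in> pair_perms p"
    and "pair_term p f (\<sigma> \<circ> transpose (2*i+1) (2*i+2)) = pair_term p f \<sigma>"
proof -
  define \<tau> where "\<tau> = transpose (2*i+1) (2*i+2)"
  have \<tau>: "\<tau> permutes {0..2*p}"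
    unfolding \<tau>_def using i by (intro permutes_swap_id) auto
  have \<tau>_simps: "\<And>j. j \<noteq> i \<Longrightarrow> \<tau> (2*j+1) = 2*j+1" "\<And>j. j \<noteq> i \<Longrightarrow> \<tau> (2*j+2) = 2*j+2"
    "\<tau> (2*i+1) = 2*i+2" "\<tau> (2*i+2) = 2*i+1" "\<tau> 0 = 0"
    unfolding \<tau>_def by (auto simp: transpose_def pair_index_simps)
  note \<sigma>D = pair_permsD[OF \<sigma>]
  show "\<sigma> \<circ> \<tau> \<in> pair_perms p"
    unfolding pair_perms_def
  proof (intro CollectI conjI allI impI)
    show "\<sigma> \<circ> \<tau> permutes {0..2*p}" using permutes_compose[OF \<tau> \<sigma>D(1)] .
    show "(\<sigma> \<circ> \<tau>) 0 = 2*p" using \<tau>_simps \<sigma>D(2) by simp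
    fix j assume "j < p"
    then show "(\<sigma> \<circ> \<tau>) (2*j+1) + (\<sigma> \<circ> \<tau>) (2*j+2) + 1 = 2*p"
      using \<tau>_simps \<sigma>D(3)[of j] \<sigma>D(3)[OF i] by (cases "j = i") auto
  qed
  have sign: "sign (\<sigma> \<circ> \<tau>) = - sign \<sigma>"
    using sign_compose[OF _ permutation_swap_id, of \<sigma> "2*i+1" "2*i+2"] \<sigma>D(1)
    unfolding \<tau>_def by (auto simp: sign_swap_id permutation_permutes)
  define h where "h \<pi> j = f (\<pi> (2*j+1)) (\<pi> (2*j+2))" for \<pi> :: "nat \<Rightarrow> nat" and j
  have "h (\<sigma> \<circ> \<tau>) i = - h \<sigma> i"
    unfolding h_def using \<tau>_simps anti[of "\<sigma> (2*i+1)" "\<sigma> (2*i+2)"] \<sigma>D(3)[OF i] by simp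
  moreover have "prod (h (\<sigma> \<circ> \<tau>)) ({..<p} - {i}) = prod (h \<sigma>) ({..<p} - {i})"
    unfolding h_def using \<tau>_simps by (intro prod.cong) auto
  ultimately have "prod (h (\<sigma> \<circ> \<tau>)) {..<p} = - prod (h \<sigma>) {..<p}"
    using prod.remove[of "{..<p}" i "h (\<sigma> \<circ> \<tau>)"] prod.remove[of "{..<p}" i "h \<sigma>"] i by simp
  then show "pair_term p f (\<sigma> \<circ> \<tau>) = pair_term p f \<sigma>"
    unfolding pair_term_def h_def[symmetric] sign by simp
qed

lemma pair_term_swap_pairs:
  assumes \<sigma>: "\<sigma> \<in> pair_perms p" and ik: "i < p" "k < p" "i \<noteq> k"
  defines "\<tau> \<equiv> transpose (2*i+1) (2*k+1) \<circ> transpose (2*i+2) (2*k+2)"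
  shows "\<sigma> \<circ> \<tau> \<in> pair_perms p"
    and "pair_term p f (\<sigma> \<circ> \<tau>) = pair_term p f \<sigma>"
    and "(\<sigma> \<circ> \<tau>) (2*j+1) = \<sigma> (2 * transpose i k j + 1)"
    and "(\<sigma> \<circ> \<tau>) (2*j+2) = \<sigma> (2 * transpose i k j + 2)"
proof -
  have \<tau>: "\<tau> permutes {0..2*p}"
    unfolding \<tau>_def using ik by (intro permutes_compose permutes_swap_id) auto
  have \<tau>_simps: "\<tau> (2*j+1) = 2 * transpose i k j + 1" "\<tau> (2*j+2) = 2 * transpose i k j + 2" "\<tau> 0 = 0"
    for j unfolding \<tau>_def by (auto simp: transpose_def pair_index_simps)
  then show "(\<sigma> \<circ> \<tau>) (2*j+1) = \<sigma> (2 * transpose i k j + 1)"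
    and "(\<sigma> \<circ> \<tau>) (2*j+2) = \<sigma> (2 * transpose i k j + 2)" by simp_all
  note \<sigma>D = pair_permsD[OF \<sigma>]
  have transpose_less: "transpose i k j < p" if "j < p" for j
    using ik that by (auto simp: transpose_def)
  show "\<sigma> \<circ> \<tau> \<in> pair_perms p"
    unfolding pair_perms_def
  proof (intro CollectI conjI allI impI)
    show "\<sigma> \<circ> \<tau> permutes {0..2*p}" using permutes_compose[OF \<tau> \<sigma>D(1)] .
    show "(\<sigma> \<circ> \<tau>) 0 = 2*p" using \<tau>_simps \<sigma>D(2) by simp
    fix j assume "j < p"
    then show "(\<sigma> \<circ> \<tau>) (2*j+1) + (\<sigma> \<circ> \<tau>) (2*j+2) + 1 = 2*p"
      using \<tau>_simps \<sigma>D(3)[OF transpose_less] by simp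
  qed
  have "sign \<tau> = 1"
    unfolding \<tau>_def using ik(3)
    by (simp add: sign_compose permutation_swap_id sign_swap_id pair_index_simps)
  then have sign: "sign (\<sigma> \<circ> \<tau>) = sign \<sigma>"
    using sign_compose \<sigma>D(1) \<tau> permutation_permutes by (metis finite_atLeastAtMost mult.right_neutral)
  define h where "h j = f (\<sigma> (2*j+1)) (\<sigma> (2*j+2))" for j
  have "(\<Prod>j<p. f ((\<sigma> \<circ> \<tau>) (2*j+1)) ((\<sigma> \<circ> \<tau>) (2*j+2))) = prod (h \<circ> transpose i k) {..<p}"
    unfolding h_def using \<tau>_simps by (intro prod.cong) auto
  also have "\<dots> = prod h {..<p}"
    using prod.permute[of "transpose i k" "{..<p}" h] ik by (simp add: permutes_swap_id)
  finally show "pair_term p f (\<sigma> \<circ> \<tau>) = pair_term p f \<sigma>"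
    unfolding pair_term_def h_def sign by simp
qed

lemma pair_perms_eq_std_pair_perm:
  assumes \<sigma>: "\<sigma> \<in> pair_perms p" and fixed: "\<And>i. i < p \<Longrightarrow> \<sigma> (2*i+1) = i"
  shows "\<sigma> = std_pair_perm p"
proof
  fix x
  note \<sigma>D = pair_permsD[OF \<sigma>]
  show "\<sigma> x = std_pair_perm p x"
  proof (cases "x \<le> 2*p")
    case True
    then consider "x = 0" | i where "i < p" "x = 2*i+1" | i where "i < p" "x = 2*i+2"
      using le_double_cases by blast
    then show ?thesis
    proof cases
      case (3 i)
      then show ?thesis using fixed[of i] \<sigma>D(3)[of i] by (simp add: std_pair_perm_simps)
    qed (use \<sigma>D(2) fixed in \<open>simp_all add: std_pair_perm_simps\<close>)
  next
    case False
    then show ?thesis using permutes_not_in[OF \<sigma>D(1)] by (simp add: std_pair_perm_def)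
  qed
qed

text \<open>A termination measure: all pair defects vanish only at \<open>std_pair_perm p\<close>, and each of the
  two swaps above lowers their sum.\<close>

definition pair_defect :: "(nat \<Rightarrow> nat) \<Rightarrow> nat \<Rightarrow> nat" where
  "pair_defect \<sigma> i = (if \<sigma> (2*i+1) = i then 0 else if \<sigma> (2*i+2) = i then 1 else 2)"

lemma pair_defect_decrease_within_pair:
  assumes i: "i < p" "\<sigma> (2*i+1) \<noteq> i" "\<sigma> (2*i+2) = i"
  shows "(\<Sum>j<p. pair_defect (\<sigma> \<circ> transpose (2*i+1) (2*i+2)) j) < (\<Sum>j<p. pair_defect \<sigma> j)"
proof (rule sum_strict_mono_ex1)
  have "(\<sigma> \<circ> transpose (2*i+1) (2*i+2)) (2*j+1) = \<sigma> (2*j+1)"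
    "(\<sigma> \<circ> transpose (2*i+1) (2*i+2)) (2*j+2) = \<sigma> (2*j+2)" if "j \<noteq> i" for j
    using that by (auto simp: transpose_def pair_index_simps)
  then have "pair_defect (\<sigma> \<circ> transpose (2*i+1) (2*i+2)) j = pair_defect \<sigma> j" if "j \<noteq> i" for j
    using that unfolding pair_defect_def by presburger
  moreover have "pair_defect (\<sigma> \<circ> transpose (2*i+1) (2*i+2)) i = 0" "pair_defect \<sigma> i = 1"
    using i by (simp_all add: pair_defect_def)
  ultimately show "\<forall>j\<in>{..<p}. pair_defect (\<sigma> \<circ> transpose (2*i+1) (2*i+2)) j \<le> pair_defect \<sigma> j"
    and "\<exists>j\<in>{..<p}. pair_defect (\<sigma> \<circ> transpose (2*i+1) (2*i+2)) j < pair_defect \<sigma> j"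
    using i(1) by (metis le_refl zero_le, metis lessThan_iff zero_less_one)
qed simp

lemma pair_defect_decrease_swap_pairs:
  assumes \<sigma>: "\<sigma> \<in> pair_perms p" and i: "i < p" "\<sigma> (2*i+1) \<noteq> i" "\<sigma> (2*i+2) \<noteq> i"
  obtains k where "k < p" "i \<noteq> k"
    "(\<Sum>j<p. pair_defect (\<sigma> \<circ> (transpose (2*i+1) (2*k+1) \<circ> transpose (2*i+2) (2*k+2))) j)
       < (\<Sum>j<p. pair_defect \<sigma> j)"
proof -
  note \<sigma>D = pair_permsD[OF \<sigma>]
  define x where "x = inv \<sigma> i"
  have \<sigma>x: "\<sigma> x = i" unfolding x_def using permutes_inverses(1)[OF \<sigma>D(1)] by simp
  have "x \<le> 2*p"
    unfolding x_def using permutes_in_image[OF permutes_inv[OF \<sigma>D(1)], of i] i by auto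
  moreover have "x \<noteq> 0" using \<sigma>x \<sigma>D(2) i(1) by (cases "x = 0") simp_all
  ultimately obtain k where k: "k < p" "x = 2*k+1 \<or> x = 2*k+2"
    using le_double_cases by blast
  have ik: "i \<noteq> k" using k \<sigma>x i by auto
  have slot_k: "\<sigma> (2*k+1) = i \<or> \<sigma> (2*k+2) = i" using k \<sigma>x by auto
  \<comment> \<open>the partner of \<open>i\<close> is \<open>2p-1-i \<ge> p > k\<close>\<close>
  have "\<sigma> (2*k+1) \<noteq> k \<and> \<sigma> (2*k+2) \<noteq> k"
    using slot_k \<sigma>D(3)[OF k(1)] ik i(1) k(1) by auto
  then have defect_k: "pair_defect \<sigma> k = 2" by (simp add: pair_defect_def)
  define \<tau> where "\<tau> = transpose (2*i+1) (2*k+1) \<circ> transpose (2*i+2) (2*k+2)"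
  note swap = pair_term_swap_pairs(3,4)[OF \<sigma> i(1) k(1) ik, folded \<tau>_def]
  have "pair_defect (\<sigma> \<circ> \<tau>) j = pair_defect \<sigma> j" if "j \<noteq> i" "j \<noteq> k" for j
    using that unfolding pair_defect_def swap by simp
  moreover have "pair_defect (\<sigma> \<circ> \<tau>) k \<le> 2"
    unfolding pair_defect_def by simp
  moreover have improved: "pair_defect (\<sigma> \<circ> \<tau>) i < pair_defect \<sigma> i"
    using slot_k i unfolding pair_defect_def swap by auto
  ultimately have "\<forall>j\<in>{..<p}. pair_defect (\<sigma> \<circ> \<tau>) j \<le> pair_defect \<sigma> j"
    using defect_k by (metis order_refl less_imp_le)
  moreover have "\<exists>j\<in>{..<p}. pair_defect (\<sigma> \<circ> \<tau>) j < pair_defect \<sigma> j"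
    using improved i(1) by blast
  ultimately have "(\<Sum>j<p. pair_defect (\<sigma> \<circ> \<tau>) j) < (\<Sum>j<p. pair_defect \<sigma> j)"
    by (intro sum_strict_mono_ex1) simp_all
  then show ?thesis unfolding \<tau>_def by (rule that[OF k(1) ik])
qed

lemma pair_term_eq_std_pair_perm:
  assumes "\<sigma> \<in> pair_perms p" and anti: "\<And>a b. a + b + 1 = 2*p \<Longrightarrow> f b a = - f a b"
  shows "pair_term p f \<sigma> = pair_term p f (std_pair_perm p)"
  using assms(1)
proof (induction "\<Sum>j<p. pair_defect \<sigma> j" arbitrary: \<sigma> rule: less_induct)
  case less
  show ?case
  proof (cases "\<forall>i<p. \<sigma> (2*i+1) = i")
    case True
    then show ?thesis using pair_perms_eq_std_pair_perm[OF less.prems] by simp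
  next
    case False
    then obtain i where i: "i < p" "\<sigma> (2*i+1) \<noteq> i" by auto
    show ?thesis
    proof (cases "\<sigma> (2*i+2) = i")
      case True
      have swap: "\<sigma> \<circ> transpose (2*i+1) (2*i+2) \<in> pair_perms p"
        "pair_term p f (\<sigma> \<circ> transpose (2*i+1) (2*i+2)) = pair_term p f \<sigma>"
        using pair_term_swap_within_pair[OF less.prems i(1)] anti by blast+
      have "pair_term p f (\<sigma> \<circ> transpose (2*i+1) (2*i+2)) = pair_term p f (std_pair_perm p)"
        using less.hyps[OF pair_defect_decrease_within_pair[OF i True] swap(1)] .
      with swap(2) show ?thesis by argo
    next
      case False
      with less.prems i obtain k where k: "k < p" "i \<noteq> k" and
        decrease: "(\<Sum>j<p. pair_defect (\<sigma> \<circ> (transpose (2*i+1) (2*k+1) \<circ> transpose (2*i+2) (2*k+2))) j)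
           < (\<Sum>j<p. pair_defect \<sigma> j)"
        by (rule pair_defect_decrease_swap_pairs)
      note swap = pair_term_swap_pairs(1)[OF less.prems i(1) k]
        pair_term_swap_pairs(2)[OF less.prems i(1) k, where f = f]
      have "pair_term p f (\<sigma> \<circ> (transpose (2*i+1) (2*k+1) \<circ> transpose (2*i+2) (2*k+2)))
              = pair_term p f (std_pair_perm p)"
        using less.hyps[OF decrease swap(1)] .
      with swap(2) show ?thesis by argo
    qed
  qed
qed

locale vergne_lie =
  fixes C :: "nat \<Rightarrow> nat \<Rightarrow> nat \<Rightarrow> 'k::field_char_0" and p :: nat
  assumes lie: "lie_sc (2*p) C" and vergne: "vergne (2*p) C"
begin

lemma bracket_antisym: "i \<le> 2*p \<Longrightarrow> j \<le> 2*p \<Longrightarrow> k \<le> 2*p \<Longrightarrow> C i j k = - C j i k"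
  using lie unfolding lie_sc_def by blast

lemma bracket_self: "i \<le> 2*p \<Longrightarrow> k \<le> 2*p \<Longrightarrow> C i i k = 0"
  using bracket_antisym[of i i k] by simp

lemma jacobi:
  "i \<le> 2*p \<Longrightarrow> j \<le> 2*p \<Longrightarrow> l \<le> 2*p \<Longrightarrow> m \<le> 2*p \<Longrightarrow>
   (\<Sum>k\<le>2*p. C i j k * C k l m + C j l k * C k i m + C l i k * C k j m) = 0"
  using lie unfolding lie_sc_def by blast

lemma bracket_X0: "1 \<le> i \<Longrightarrow> i \<le> 2*p-1 \<Longrightarrow> k \<le> 2*p \<Longrightarrow> C 0 i k = (if k = i+1 then 1 else 0)"
  using vergne unfolding vergne_def by blast

lemma bracket_X0_top: "k \<le> 2*p \<Longrightarrow> C 0 (2*p) k = 0"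
  using vergne unfolding vergne_def by blast

lemma bracket_X1_top: "k \<le> 2*p \<Longrightarrow> C 1 (2*p-1) k = 0"
  using vergne unfolding vergne_def by blast

lemma bracket_filtration:
  assumes "1 \<le> a" "1 \<le> b" "a \<le> 2*p" "b \<le> 2*p" "k \<le> 2*p" "k < a+b"
  shows "C a b k = 0"
proof -
  have low: "C i j k = 0" if "1 \<le> i" "i < j" "j \<le> 2*p" "k \<le> 2*p" "k < i + j" for i j k
    using vergne that unfolding vergne_def by blast
  consider "a < b" | "a = b" | "b < a" by linarith
  then show ?thesis
    by cases (use assms low[of a b k] low[of b a k] bracket_self bracket_antisym[of a b k] in auto)
qed

text \<open>The Jacobi identity for \<open>X\<^sub>0, X\<^sub>i, X\<^sub>j\<close>: \<open>ad X\<^sub>0\<close> is a derivation, read off in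
  the component of weight zero.\<close>

lemma weight_zero_recursion:
  assumes "1 \<le> i" "1 \<le> j" "i+j+1 \<le> 2*p"
  shows "C i (j+1) (i+j+1) + C (i+1) j (i+j+1) = C i j (i+j)"
proof -
  define M where "M = i+j+1"
  have "(\<Sum>k\<le>2*p. C 0 i k * C k j M + C i j k * C k 0 M + C j 0 k * C k i M) = 0"
    using jacobi[of 0 i j M] assms unfolding M_def by simp
  moreover have "(\<Sum>k\<le>2*p. C 0 i k * C k j M) = C (i+1) j M"
    using assms bracket_X0[of i] by (subst sum_eq_single[of _ "i+1"]) auto
  moreover have "(\<Sum>k\<le>2*p. C i j k * C k 0 M) = - C i j (i+j)"
  proof -
    have "C k 0 M = - (if k = i+j then 1 else 0)" if "k \<le> 2*p" for k
      using that assms bracket_antisym[of k 0 M] bracket_X0[of k M] bracket_X0_top[of M]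
        bracket_self[of 0 M] unfolding M_def by (cases "k = 0 \<or> k = 2*p") auto
    then show ?thesis
      using assms by (subst sum_eq_single[of _ "i+j"]) auto
  qed
  moreover have "(\<Sum>k\<le>2*p. C j 0 k * C k i M) = C i (j+1) M"
  proof -
    have "C j 0 k = - (if k = j+1 then 1 else 0)" if "k \<le> 2*p" for k
      using that assms bracket_antisym[of j 0 k] bracket_X0[of j k] by simp
    then have "(\<Sum>k\<le>2*p. C j 0 k * C k i M) = - C (j+1) i M"
      using assms by (subst sum_eq_single[of _ "j+1"]) auto
    then show ?thesis using bracket_antisym[of "j+1" i M] assms unfolding M_def by simp
  qed
  ultimately show ?thesis unfolding M_def by (simp add: sum.distrib algebra_simps)
qed

lemma weight_zero_recursion_X1:
  "1 \<le> j \<Longrightarrow> j+2 \<le> 2*p \<Longrightarrow> C 1 (j+1) (j+2) + C 2 j (j+2) = C 1 j (j+1)"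
  using weight_zero_recursion[of 1 j] by (simp add: numeral_2_eq_2)

lemma weight_zero_jacobi_X2_X1:
  assumes "3 \<le> c" "c+3 \<le> 2*p"
  shows "C 2 c (c+2) * C (c+2) 1 (c+3) + C c 1 (c+1) * C (c+1) 2 (c+3) + C 1 2 3 * C 3 c (c+3) = 0"
proof -
  have "(\<Sum>k\<le>2*p. C 2 c k * C k 1 (c+3) + C c 1 k * C k 2 (c+3) + C 1 2 k * C k c (c+3)) = 0"
    using jacobi[of 2 c 1 "c+3"] assms by simp
  moreover have "(\<Sum>k\<le>2*p. C 2 c k * C k 1 (c+3)) = C 2 c (c+2) * C (c+2) 1 (c+3)"
    using assms bracket_filtration[of 2 c] bracket_filtration[of _ 1 "c+3"]
    by (subst sum_eq_single[of _ "c+2"]) (auto simp: not_less nat_neq_iff)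
  moreover have "(\<Sum>k\<le>2*p. C c 1 k * C k 2 (c+3)) = C c 1 (c+1) * C (c+1) 2 (c+3)"
    using assms bracket_filtration[of c 1] bracket_filtration[of _ 2 "c+3"]
    by (subst sum_eq_single[of _ "c+1"]) (auto simp: not_less nat_neq_iff)
  moreover have "(\<Sum>k\<le>2*p. C 1 2 k * C k c (c+3)) = C 1 2 3 * C 3 c (c+3)"
    using assms bracket_filtration[of 1 2] bracket_filtration[of _ c "c+3"]
    by (subst sum_eq_single[of _ 3]) (auto simp: not_less nat_neq_iff)
  ultimately show ?thesis by (simp add: sum.distrib)
qed

text \<open>Up to level \<open>m\<close>, the weight-zero constants \<open>C i j (i+j)\<close> are those of
  \<open>[X\<^sub>1, X\<^sub>j] = \<lambda> X\<^sub>j\<^sub>+\<^sub>1\<close> with \<open>\<lambda> = C 1 2 3\<close>. This propagates to all levels, and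
  \<open>[X\<^sub>1, X\<^sub>2\<^sub>p\<^sub>-\<^sub>1] = 0\<close> then forces \<open>\<lambda> = 0\<close>.\<close>

definition graded_pattern :: "nat \<Rightarrow> nat \<Rightarrow> 'k" where
  "graded_pattern i j = (if i = 1 \<and> 2 \<le> j then C 1 2 3 else if j = 1 \<and> 2 \<le> i then - C 1 2 3 else 0)"

definition graded_upto :: "nat \<Rightarrow> bool" where
  "graded_upto m \<longleftrightarrow> (\<forall>i j. 1 \<le> i \<longrightarrow> 1 \<le> j \<longrightarrow> i + j \<le> m \<longrightarrow> C i j (i+j) = graded_pattern i j)"

lemma graded_uptoD: "graded_upto m \<Longrightarrow> 1 \<le> i \<Longrightarrow> 1 \<le> j \<Longrightarrow> i + j \<le> m \<Longrightarrow> C i j (i+j) = graded_pattern i j"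
  unfolding graded_upto_def by blast

context
  fixes m :: nat
  assumes graded: "graded_upto m" and m: "2 \<le> m" "m + 2 \<le> 2*p"
begin

lemma graded_next_odd_level:
  "k+2+j = m+1 \<Longrightarrow> 2 \<le> j \<Longrightarrow> C (k+2) j (m+1) = (-1)^(k+1) * (C 1 m (m+1) - C 1 2 3)"
proof (induction k arbitrary: j)
  case 0
  then have "m = j+1" by simp
  have "C 1 j (j+1) = C 1 2 3" using graded_uptoD[OF graded, of 1 j] 0 \<open>m = j+1\<close> by (simp add: graded_pattern_def)
  then show ?case
    using weight_zero_recursion_X1[of j] 0 m \<open>m = j+1\<close> by (simp add: numeral_2_eq_2 algebra_simps)
next
  case (Suc k)
  have "C (k+2) j (k+2+j) = 0" using graded_uptoD[OF graded, of "k+2" j] Suc.prems by (simp add: graded_pattern_def)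
  then have "C (k+3) j (m+1) = - C (k+2) (j+1) (m+1)"
    using weight_zero_recursion[of "k+2" j] Suc.prems m by (simp add: numeral_3_eq_3 eq_neg_iff_add_eq_0 add.commute)
  then show ?case using Suc.IH[of "j+1"] Suc.prems by (simp add: numeral_3_eq_3)
qed

lemma graded_next_even_level:
  "k+2+j = m+2 \<Longrightarrow> 2 \<le> j \<Longrightarrow> C (k+2) j (m+2) =
     (-1)^(k+1) * ((C 1 (m+1) (m+2) - C 1 2 3) - of_nat (k+1) * (C 1 m (m+1) - C 1 2 3))"
proof (induction k arbitrary: j)
  case 0
  then show ?case
    using weight_zero_recursion_X1[of m] m by (simp add: numeral_2_eq_2 algebra_simps)
next
  case (Suc k)
  define \<mu> where "\<mu> = C 1 m (m+1) - C 1 2 3"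
  define \<nu> where "\<nu> = C 1 (m+1) (m+2) - C 1 2 3"
  have "C (k+3) j (m+2) = C (k+2) j (m+1) - C (k+2) (j+1) (m+2)"
    using weight_zero_recursion[of "k+2" j] Suc.prems m by (simp add: numeral_3_eq_3 algebra_simps)
  also have "\<dots> = (-1)^(k+1) * \<mu> - (-1)^(k+1) * (\<nu> - of_nat (k+1) * \<mu>)"
    using Suc.IH[of "j+1"] Suc.prems graded_next_odd_level[of k j] unfolding \<mu>_def \<nu>_def by simp
  also have "\<dots> = (-1)^(k+2) * (\<nu> - of_nat (k+2) * \<mu>)"
    by (simp add: algebra_simps)
  finally show ?case unfolding \<mu>_def \<nu>_def by (simp add: numeral_3_eq_3)
qed

end

text \<open>On an even level the diagonal bracket \<open>[X\<^sub>q\<^sub>+\<^sub>1, X\<^sub>q\<^sub>+\<^sub>1] = 0\<close> gives \<open>\<nu> = q \<mu>\<close>, and the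
  Jacobi identity for \<open>X\<^sub>2, X\<^sub>c, X\<^sub>1\<close> gives \<open>\<mu> \<nu> = 0\<close>; in characteristic zero both vanish.\<close>

lemma graded_next_X1:
  assumes graded: "graded_upto (2*q)" and q: "1 \<le> q" "2*q+2 \<le> 2*p"
  shows "C 1 (2*q) (2*q+1) = C 1 2 3" and "C 1 (2*q+1) (2*q+2) = C 1 2 3"
proof -
  define m where "m = 2*q"
  define \<mu> where "\<mu> = C 1 m (m+1) - C 1 2 3"
  define \<nu> where "\<nu> = C 1 (m+1) (m+2) - C 1 2 3"
  have m: "2 \<le> m" "m + 2 \<le> 2*p" using q unfolding m_def by simp_all
  note odd_level = graded_next_odd_level[OF graded[folded m_def] m, folded \<mu>_def]
  note even_level = graded_next_even_level[OF graded[folded m_def] m, folded \<mu>_def \<nu>_def]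
  have \<nu>: "\<nu> = of_nat q * \<mu>"
  proof -
    obtain r where r: "q = Suc r" using q by (cases q) auto
    have "C (r+2) (q+1) (m+2) = 0" using bracket_self[of "q+1" "m+2"] r m unfolding m_def by simp
    then show ?thesis using even_level[of r "q+1"] r unfolding m_def by simp
  qed
  have "\<mu> = 0"
  proof (cases "q = 1")
    case True
    then show ?thesis unfolding \<mu>_def m_def by simp
  next
    case False
    define c where "c = m - 1"
    have c: "3 \<le> c" "c+3 \<le> 2*p" "m = c+1" using q False m unfolding c_def m_def by simp_all
    have e1: "C 2 c (c+2) = - \<mu>" using odd_level[of 0 c] c by (simp add: numeral_2_eq_2)
    have e2: "C (c+2) 1 (c+3) = - (C 1 2 3 + \<nu>)"
      using bracket_antisym[of "c+2" 1 "c+3"] c unfolding \<nu>_def by (simp add: numeral_3_eq_3)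
    have e3: "C c 1 (c+1) = - C 1 2 3"
      using bracket_antisym[of c 1 "c+1"] graded_uptoD[OF graded, of 1 c] c
      unfolding m_def by (simp add: graded_pattern_def)
    have e4: "C (c+1) 2 (c+3) = \<nu> - \<mu>"
      using bracket_antisym[of "c+1" 2 "c+3"] even_level[of 0 "c+1"] c
      by (simp add: numeral_3_eq_3 numeral_2_eq_2)
    have e5: "C 3 c (c+3) = \<nu> - 2 * \<mu>"
      using even_level[of 1 c] c by (simp add: numeral_3_eq_3 numeral_2_eq_2)
    have "\<mu> * \<nu> = 0"
      using weight_zero_jacobi_X2_X1[OF c(1,2)] unfolding e1 e2 e3 e4 e5 by (simp add: algebra_simps)
    then have "of_nat q * (\<mu> * \<mu>) = 0" using \<nu> by (simp add: algebra_simps)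
    then show ?thesis using q by simp
  qed
  with \<nu> show "C 1 (2*q) (2*q+1) = C 1 2 3" and "C 1 (2*q+1) (2*q+2) = C 1 2 3"
    unfolding \<mu>_def \<nu>_def m_def by simp_all
qed

lemma graded_upto_step:
  assumes graded: "graded_upto (2*q)" and q: "1 \<le> q" "2*q+2 \<le> 2*p"
  shows "graded_upto (2*q+2)"
proof -
  have m: "2 \<le> 2*q" "2*q + 2 \<le> 2*p" using q by simp_all
  note X1 = graded_next_X1[OF graded q]
  have X1': "C 1 j (1+j) = C 1 2 3" if "2*q \<le> j" "j \<le> 2*q+1" for j
  proof -
    have "j = 2*q \<or> j = 2*q+1" using that by linarith
    then show ?thesis using X1 by (auto simp: add.commute)
  qed
  have inner: "C i j (i+j) = 0" if ij: "2 \<le> i" "2 \<le> j" "2*q < i+j" "i+j \<le> 2*q+2" for i j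
  proof -
    obtain k where k: "i = k+2" using \<open>2 \<le> i\<close> by (metis add.commute le_Suc_ex)
    consider "i+j = 2*q+1" | "i+j = 2*q+2" using ij by linarith
    then show ?thesis
      by cases (use graded_next_odd_level[OF graded m, of k j] graded_next_even_level[OF graded m, of k j]
          X1 k ij in simp_all)
  qed
  show ?thesis
    unfolding graded_upto_def
  proof (intro allI impI)
    fix i j assume ij: "1 \<le> i" "1 \<le> j" "i + j \<le> 2*q+2"
    consider "i + j \<le> 2*q" | "2*q < i+j" "i = 1" | "2*q < i+j" "j = 1" | "2*q < i+j" "2 \<le> i" "2 \<le> j"
      using ij by linarith
    then show "C i j (i+j) = graded_pattern i j"
    proof cases
      case 1
      then show ?thesis using graded_uptoD[OF graded] ij by blast
    next
      case 2
      then show ?thesis using X1'[of j] ij m by (auto simp: graded_pattern_def)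
    next
      case 3
      then show ?thesis
        using X1'[of i] bracket_antisym[of i 1 "i+1"] ij m by (auto simp: graded_pattern_def)
    next
      case 4
      then show ?thesis using inner ij by (simp add: graded_pattern_def)
    qed
  qed
qed

lemma graded_upto_double: "1 \<le> q \<Longrightarrow> 2*q \<le> 2*p \<Longrightarrow> graded_upto (2*q)"
proof (induction q rule: dec_induct)
  case base
  have "C 1 1 2 = 0" using bracket_self[of 1 2] base by simp
  show ?case
    unfolding graded_upto_def
  proof (intro allI impI)
    fix i j :: nat assume "1 \<le> i" "1 \<le> j" "i + j \<le> 2*1"
    then have "i = 1" "j = 1" by linarith+
    with \<open>C 1 1 2 = 0\<close> show "C i j (i+j) = graded_pattern i j"
      by (simp add: graded_pattern_def numeral_2_eq_2)
  qed
next
  case (step q)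
  then show ?case using graded_upto_step[of q] by simp
qed

lemma weight_zero_vanishes:
  assumes ij: "1 \<le> i" "1 \<le> j" "i+j \<le> 2*p"
  shows "C i j (i+j) = 0"
proof (cases "p = 1")
  case True
  then have "i = 1" "j = 1" using ij by linarith+
  then show ?thesis using \<open>p = 1\<close> bracket_self[of 1 2] by (simp add: numeral_2_eq_2)
next
  case False
  with ij have p: "2 \<le> p" by linarith
  have graded: "graded_upto (2*p)" using graded_upto_double[of p] p by simp
  have "C 1 (2*p-1) (1 + (2*p-1)) = graded_pattern 1 (2*p-1)"
    using graded_uptoD[OF graded, of 1 "2*p-1"] p by simp
  moreover have "C 1 (2*p-1) (1 + (2*p-1)) = 0" using bracket_X1_top[of "1 + (2*p-1)"] p by simp
  moreover have "2 \<le> 2*p-1" using p by simp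
  ultimately have "C 1 2 3 = 0" by (simp add: graded_pattern_def)
  then show ?thesis using graded_uptoD[OF graded ij] by (simp add: graded_pattern_def)
qed

lemma bracket_filtration_strict:
  assumes "1 \<le> a" "1 \<le> b" "a \<le> 2*p" "b \<le> 2*p" "k \<le> 2*p" "k \<le> a+b"
  shows "C a b k = 0"
proof (cases "k < a + b")
  case False
  with assms show ?thesis using weight_zero_vanishes[of a b] by simp
qed (use assms bracket_filtration[of a b k] in simp)

lemma d_form_vanishes:
  assumes ab: "a \<le> 2*p" "b \<le> 2*p" "2*p \<le> a + b"
  shows "d_form (2*p) C \<omega> a b = 0"
proof -
  have "C a b k = 0" if k: "k \<le> 2*p" for k
  proof -
    consider "a = 0" | "b = 0" | "1 \<le> a" "1 \<le> b" by linarith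
    then show ?thesis
    proof cases
      case 1
      then show ?thesis using ab k bracket_X0_top by simp
    next
      case 2
      then show ?thesis using ab k bracket_X0_top bracket_antisym[of a 0 k] by simp
    next
      case 3
      then show ?thesis using ab k bracket_filtration_strict[of a b k] by simp
    qed
  qed
  then show ?thesis unfolding d_form_def by simp
qed

lemma d_form_complementary:
  assumes ab: "a + b + 1 = 2*p"
  shows "d_form (2*p) C \<omega> a b = - C a b (2*p) * \<omega> (2*p)"
proof -
  have "C a b k = 0" if k: "k \<le> 2*p" "k \<noteq> 2*p" for k
  proof -
    consider "a = 0" | "b = 0" | "1 \<le> a" "1 \<le> b" by linarith
    then show ?thesis
    proof cases
      case 1
      moreover have "b \<noteq> 0" using ab 1 by presburger
      ultimately show ?thesis using bracket_X0[of b k] ab k by auto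
    next
      case 2
      moreover have "a \<noteq> 0" using ab 2 by presburger
      ultimately show ?thesis using bracket_X0[of a k] bracket_antisym[of a b k] ab k by auto
    next
      case 3
      then show ?thesis using ab k bracket_filtration_strict[of a b k] by simp
    qed
  qed
  then have "(\<Sum>k\<le>2*p. C a b k * \<omega> k) = C a b (2*p) * \<omega> (2*p)"
    by (subst sum_eq_single[of _ "2*p"]) auto
  then show ?thesis unfolding d_form_def by simp
qed

lemma contact_factor_vanishes:
  assumes \<sigma>: "\<sigma> permutes {0..2*p}" "\<sigma> \<notin> pair_perms p"
  shows "(\<Prod>i<p. d_form (2*p) C \<omega> (\<sigma> (2*i+1)) (\<sigma> (2*i+2))) = 0"
proof -
  obtain i where i: "i < p" "2*p \<le> \<sigma> (2*i+1) + \<sigma> (2*i+2)"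
    using pair_perms_if_pair_sums_less[OF \<sigma>(1)] \<sigma>(2) by (meson not_less)
  then have "d_form (2*p) C \<omega> (\<sigma> (2*i+1)) (\<sigma> (2*i+2)) = 0"
    by (intro d_form_vanishes permutes_atLeastAtMost_le[OF \<sigma>(1)]) simp_all
  with i(1) show ?thesis by (intro prod_zero) auto
qed

lemma contact_term_pair_perm:
  assumes \<sigma>: "\<sigma> \<in> pair_perms p"
  shows "of_int (sign \<sigma>) * \<omega> (\<sigma> 0) * (\<Prod>i<p. d_form (2*p) C \<omega> (\<sigma> (2*i+1)) (\<sigma> (2*i+2)))
         = \<omega> (2*p) ^ (p+1) * pair_term p (\<lambda>a b. - C a b (2*p)) \<sigma>"
proof -
  have "(\<Prod>i<p. d_form (2*p) C \<omega> (\<sigma> (2*i+1)) (\<sigma> (2*i+2)))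
        = (\<Prod>i<p. - C (\<sigma> (2*i+1)) (\<sigma> (2*i+2)) (2*p) * \<omega> (2*p))"
    using pair_permsD(3)[OF \<sigma>] d_form_complementary by (intro prod.cong) auto
  also have "\<dots> = (\<Prod>i<p. - C (\<sigma> (2*i+1)) (\<sigma> (2*i+2)) (2*p)) * \<omega> (2*p) ^ p"
    by (simp only: prod.distrib prod_constant card_lessThan)
  finally show ?thesis
    using pair_permsD(2)[OF \<sigma>] unfolding pair_term_def by (simp add: algebra_simps)
qed

lemma contact_value_eq:
  "contact_value p C \<omega> =
     of_nat (card (pair_perms p)) * \<omega> (2*p) ^ (p+1) * pair_term p (\<lambda>a b. - C a b (2*p)) (std_pair_perm p)"
proof -
  have anti: "- C b a (2*p) = - (- C a b (2*p))" if "a + b + 1 = 2*p" for a b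
    using that bracket_antisym[of b a "2*p"] by simp
  have "contact_value p C \<omega> =
          (\<Sum>\<sigma>\<in>pair_perms p. of_int (sign \<sigma>) * \<omega> (\<sigma> 0) *
             (\<Prod>i<p. d_form (2*p) C \<omega> (\<sigma> (2*i+1)) (\<sigma> (2*i+2))))"
    unfolding contact_value_def using contact_factor_vanishes finite_permutations[of "{0..2*p}"]
    by (intro sum.mono_neutral_right) (auto simp: pair_perms_def)
  also have "\<dots> = (\<Sum>\<sigma>\<in>pair_perms p. \<omega> (2*p) ^ (p+1) * pair_term p (\<lambda>a b. - C a b (2*p)) (std_pair_perm p))"
    using contact_term_pair_perm pair_term_eq_std_pair_perm[OF _ anti] by (intro sum.cong) auto
  finally show ?thesis by simp
qed

lemma std_pair_term_ne_0_iff: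
  "pair_term p (\<lambda>a b. - C a b (2*p)) (std_pair_perm p) \<noteq> 0 \<longleftrightarrow>
   (\<Prod>i\<in>{1..p-1}. C i (2*p - 1 - i) (2*p)) \<noteq> 0"
proof -
  have "of_int (sign (std_pair_perm p)) \<noteq> (0::'k)" by (simp add: sign_def)
  moreover have "(\<Prod>i<p. - C (std_pair_perm p (2*i+1)) (std_pair_perm p (2*i+2)) (2*p))
                   = (\<Prod>i<p. - C i (2*p - 1 - i) (2*p))"
    by (intro prod.cong) (simp_all add: std_pair_perm_simps)
  moreover have "(\<Prod>i<p. - C i (2*p - 1 - i) (2*p)) \<noteq> 0 \<longleftrightarrow> (\<Prod>i\<in>{1..p-1}. C i (2*p - 1 - i) (2*p)) \<noteq> 0"
  proof (cases "p = 0")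
    case False
    then have "{..<p} = insert 0 {1..p-1}" by auto
    moreover have "C 0 (2*p - 1) (2*p) = 1" using False bracket_X0[of "2*p-1" "2*p"] by simp
    ultimately show ?thesis by (simp add: prod_zero_iff)
  qed simp
  ultimately show ?thesis unfolding pair_term_def by simp
qed

end

theorem proposition35:
  fixes C :: "nat \<Rightarrow> nat \<Rightarrow> nat \<Rightarrow> 'k::{alg_closed_field, field_char_0}"
    and p :: nat
  assumes "lie_sc (2*p) C"
    and "filiform (2*p) C"
    and "vergne (2*p) C"
  shows "(\<exists>\<omega>::nat \<Rightarrow> 'k. is_contact_form p C \<omega>) \<longleftrightarrow>
         (\<Prod>i\<in>{1..p-1}. C i (2*p - 1 - i) (2*p)) \<noteq> 0"
proof -
  interpret vergne_lie C p using assms(1,3) by unfold_locales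
  have "card (pair_perms p) \<noteq> 0"
    using finite_pair_perms std_pair_perm_in_pair_perms by (metis card_0_eq empty_iff)
  then have "(\<exists>\<omega>::nat \<Rightarrow> 'k. is_contact_form p C \<omega>) \<longleftrightarrow>
             pair_term p (\<lambda>a b. - C a b (2*p)) (std_pair_perm p) \<noteq> 0"
    unfolding is_contact_form_def contact_value_eq by (auto intro: exI[of _ "\<lambda>_. 1"])
  then show ?thesis using std_pair_term_ne_0_iff by simp
qed

end
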